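(* (i) For integers $r\geq1$, $k_1\geq2$, $k_2,\ldots,k_r\geq1$, \[ \lim_{m\to\infty}\zeta^{\star}(k_1,\ldots,k_r,\{2\}^m)=\sum_{n_1\geq\cdots\geq n_r\geq1}\frac{2}{n_1^{k_1}\cdots n_{r-1}^{k_{r-1}}\,n_r^{k_r-1}(n_r+1)}. \] (ii) For every integer $p\geq2$, \[ \lim_{m\to\infty}\zeta^{\star}(\{p\}^m)=\prod_{n\geq2}\frac{1}{1-n^{-p}}. \]
   Context: $\zeta^{\star}(k_1,\ldots,k_r)=\sum_{n_1\geq\cdots\geq n_r\geq 1}\frac{1}{n_1^{k_1}\cdots n_r^{k_r}}$ for $k_1\geq2$, $k_2,\ldots,k_r\geq1$; $\{p\}^m$ denotes $m$ consecutive arguments equal to $p$. *)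

theory Defs
  imports "HOL-Analysis.Analysis"
begin

definition zs_index :: "nat \<Rightarrow> nat list set" where
  "zs_index r = {ns. length ns = r \<and> sorted_wrt (\<ge>) ns \<and> (\<forall>n\<in>set ns. 1 \<le> n)}"

text \<open>Multiple zeta-star value zeta*(k_1,...,k_r) (meaningful for k_1 \<ge> 2, k_i \<ge> 1).\<close>
definition zeta_star :: "nat list \<Rightarrow> real" where
  "zeta_star ks = (\<Sum>\<^sub>\<infinity>ns\<in>zs_index (length ks). \<Prod>i<length ks. 1 / real (ns ! i) ^ (ks ! i))"

end

theory Submission
  imports Defs
begin

text \<open>Truncate the sums at \<open>n_1 \<le> N\<close>. The tail \<open>{p}^m\<close> then enters only through the
  weight \<open>h_m(n) = \<zeta>\<^sup>\<star>_{\<le>n}({p}^m)\<close> it puts on the last index \<open>n = n_r\<close>. As \<open>m \<rightarrow> \<infinity>\<close>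
  these weights increase to the solution of \<open>h(n) = h(n - 1) + n^{-p} h(n)\<close>, \<open>h(1) = 1\<close>,
  namely \<open>\<Prod>_{2 \<le> j \<le> n} (1 - j^{-p})^{-1}\<close>, which is \<open>2n/(n + 1)\<close> for \<open>p = 2\<close>.
  All terms are nonnegative and the weights stay below 2, so for \<open>k_1 \<ge> 2\<close> the truncated
  sums are uniformly bounded (by a multiple of \<open>\<Sum> n^{-3/2}\<close>) and the limits in \<open>m\<close> and \<open>N\<close>
  can be exchanged.\<close>

definition zs_index_upto :: "nat \<Rightarrow> nat \<Rightarrow> nat list set" where
  "zs_index_upto r N = {ns. length ns = r \<and> sorted_wrt (\<ge>) ns \<and> (\<forall>n\<in>set ns. 1 \<le> n \<and> n \<le> N)}"

definition zs_term :: "nat list \<Rightarrow> nat list \<Rightarrow> real" where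
  "zs_term ks ns = (\<Prod>i<length ks. 1 / real (ns ! i) ^ (ks ! i))"

text \<open>The weight \<open>\<phi>\<close> sits on the last index \<open>n_r\<close> (on \<open>N\<close> if \<open>ks = []\<close>),
  cf. \<open>zs_partial_eq_sum\<close>.\<close>
fun zs_partial :: "nat list \<Rightarrow> (nat \<Rightarrow> real) \<Rightarrow> nat \<Rightarrow> real" where
  "zs_partial [] \<phi> N = \<phi> N"
| "zs_partial (k # ks) \<phi> N = (\<Sum>n = 1..N. 1 / real n ^ k * zs_partial ks \<phi> n)"

definition euler_partial :: "nat \<Rightarrow> nat \<Rightarrow> real" where
  "euler_partial p N = (\<Prod>n = 2..N. 1 / (1 - 1 / real n ^ p))"

lemma finite_zs_index_upto: "finite (zs_index_upto r N)"
proof -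
  have "zs_index_upto r N \<subseteq> {ns. set ns \<subseteq> {1..N} \<and> length ns = r}"
    unfolding zs_index_upto_def by auto
  then show ?thesis
    using finite_lists_length_eq[of "{1..N}" r] finite_subset by blast
qed

lemma zs_index_upto_0: "zs_index_upto 0 N = {[]}"
  unfolding zs_index_upto_def by auto

lemma zs_index_upto_Suc:
  "zs_index_upto (Suc r) N = (\<lambda>(n, ns). n # ns) ` (SIGMA n:{1..N}. zs_index_upto r n)"
proof (rule set_eqI)
  fix xs
  show "xs \<in> zs_index_upto (Suc r) N \<longleftrightarrow> xs \<in> (\<lambda>(n, ns). n # ns) ` (SIGMA n:{1..N}. zs_index_upto r n)"
  proof
    assume xs: "xs \<in> zs_index_upto (Suc r) N"
    then obtain n ns where "xs = n # ns"
      unfolding zs_index_upto_def by (cases xs) auto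
    with xs show "xs \<in> (\<lambda>(n, ns). n # ns) ` (SIGMA n:{1..N}. zs_index_upto r n)"
      unfolding zs_index_upto_def using le_trans by force
  qed (unfold zs_index_upto_def, use le_trans in fastforce)
qed

lemma zs_index_upto_subset: "zs_index_upto r N \<subseteq> zs_index r"
  unfolding zs_index_upto_def zs_index_def by auto

lemma zs_index_upto_mono: "N \<le> M \<Longrightarrow> zs_index_upto r N \<subseteq> zs_index_upto r M"
  unfolding zs_index_upto_def by auto

lemma finite_subset_zs_index_upto:
  assumes "finite F" "F \<subseteq> zs_index r"
  shows "F \<subseteq> zs_index_upto r (\<Sum>ns\<in>F. sum_list ns)"
proof
  fix ns assume ns: "ns \<in> F"
  have "\<forall>n\<in>set ns. n \<le> sum_list ns"
    by (auto intro: member_le_sum_list)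
  moreover have "sum_list ns \<le> (\<Sum>ns\<in>F. sum_list ns)"
    using ns assms(1) by (intro member_le_sum) auto
  ultimately show "ns \<in> zs_index_upto r (\<Sum>ns\<in>F. sum_list ns)"
    using ns assms(2) unfolding zs_index_upto_def zs_index_def by fastforce
qed

subsection \<open>Sums over \<open>zs_index\<close> as limits of truncations\<close>

lemma bounded_zs_index_upto_sums:
  fixes f :: "nat list \<Rightarrow> real"
  assumes nonneg: "\<And>ns. ns \<in> zs_index r \<Longrightarrow> 0 \<le> f ns"
    and bound: "\<And>N. sum f (zs_index_upto r N) \<le> B"
  shows "f summable_on zs_index r" and "infsum f (zs_index r) \<le> B"
proof -
  have finite_sums: "sum f F \<le> B" if "finite F" "F \<subseteq> zs_index r" for F
  proof -
    have "sum f F \<le> sum f (zs_index_upto r (\<Sum>ns\<in>F. sum_list ns))"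
      using finite_subset_zs_index_upto[OF that] zs_index_upto_subset[of r] nonneg
      by (intro sum_mono2 finite_zs_index_upto) auto
    also have "\<dots> \<le> B" by (rule bound)
    finally show ?thesis .
  qed
  show summable: "f summable_on zs_index r"
    using finite_sums by (intro nonneg_bdd_above_summable_on nonneg) (auto simp: bdd_above_def)
  show "infsum f (zs_index r) \<le> B"
    using finite_sums by (intro infsum_le_finite_sums summable)
qed

lemma sum_zs_index_upto_le_infsum:
  fixes f :: "nat list \<Rightarrow> real"
  assumes "\<And>ns. ns \<in> zs_index r \<Longrightarrow> 0 \<le> f ns" and "f summable_on zs_index r"
  shows "sum f (zs_index_upto r N) \<le> infsum f (zs_index r)"
  using assms zs_index_upto_subset by (intro finite_sum_le_infsum finite_zs_index_upto) auto

lemma tendsto_sum_zs_index_upto: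
  fixes f :: "nat list \<Rightarrow> real"
  assumes nonneg: "\<And>ns. ns \<in> zs_index r \<Longrightarrow> 0 \<le> f ns"
    and bound: "\<And>N. sum f (zs_index_upto r N) \<le> B"
  shows "(\<lambda>N. sum f (zs_index_upto r N)) \<longlonglongrightarrow> infsum f (zs_index r)"
proof -
  have "incseq (\<lambda>N. sum f (zs_index_upto r N))"
    using zs_index_upto_subset nonneg zs_index_upto_mono
    by (intro incseq_SucI sum_mono2 finite_zs_index_upto) auto
  then obtain L where L: "(\<lambda>N. sum f (zs_index_upto r N)) \<longlonglongrightarrow> L"
    and le_L: "\<And>N. sum f (zs_index_upto r N) \<le> L"
    using incseq_convergent bound by blast
  have "infsum f (zs_index r) \<le> L"
    using bounded_zs_index_upto_sums(2)[OF nonneg le_L] .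
  moreover have "L \<le> infsum f (zs_index r)"
    using sum_zs_index_upto_le_infsum[OF nonneg bounded_zs_index_upto_sums(1)[OF nonneg bound]]
    by (intro LIMSEQ_le_const2[OF L]) auto
  ultimately show ?thesis using L by simp
qed

lemma zs_term_Cons: "zs_term (k # ks) (n # ns) = 1 / real n ^ k * zs_term ks ns"
  unfolding zs_term_def length_Cons prod.lessThan_Suc_shift by simp

lemma zs_term_nonneg: "0 \<le> zs_term ks ns"
  unfolding zs_term_def by (intro prod_nonneg) auto

lemma zeta_star_eq_infsum_zs_term: "zeta_star ks = infsum (zs_term ks) (zs_index (length ks))"
  unfolding zeta_star_def zs_term_def ..

lemma zs_partial_eq_sum:
  "zs_partial ks \<phi> N = (\<Sum>ns\<in>zs_index_upto (length ks) N. zs_term ks ns * \<phi> (last (N # ns)))"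
proof (induction ks arbitrary: N)
  case Nil
  then show ?case by (simp add: zs_index_upto_0 zs_term_def)
next
  case (Cons k ks)
  let ?S = "SIGMA n:{1..N}. zs_index_upto (length ks) n"
  have inj: "inj_on (\<lambda>(n, ns). n # ns) ?S"
    by (auto simp: inj_on_def)
  have "(\<Sum>ns\<in>zs_index_upto (length (k # ks)) N. zs_term (k # ks) ns * \<phi> (last (N # ns)))
      = (\<Sum>(n, ns)\<in>?S. zs_term (k # ks) (n # ns) * \<phi> (last (n # ns)))"
    unfolding length_Cons zs_index_upto_Suc sum.reindex[OF inj] by (simp add: case_prod_beta)
  also have "\<dots> = (\<Sum>n = 1..N. \<Sum>ns\<in>zs_index_upto (length ks) n.
                    1 / real n ^ k * (zs_term ks ns * \<phi> (last (n # ns))))"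
    by (subst sum.Sigma[symmetric]) (auto simp: finite_zs_index_upto zs_term_Cons)
  also have "\<dots> = zs_partial (k # ks) \<phi> N"
    by (simp add: Cons sum_distrib_left)
  finally show ?case ..
qed

lemma zs_partial_append: "zs_partial (ks @ js) \<phi> N = zs_partial ks (zs_partial js \<phi>) N"
  by (induction ks arbitrary: N) auto

lemma zs_partial_nonneg: "(\<And>n. 0 \<le> \<phi> n) \<Longrightarrow> 0 \<le> zs_partial ks \<phi> N"
  by (induction ks arbitrary: N) (auto intro!: sum_nonneg)

lemma zs_partial_mono: "(\<And>n. \<phi> n \<le> \<psi> n) \<Longrightarrow> zs_partial ks \<phi> N \<le> zs_partial ks \<psi> N"
  by (induction ks arbitrary: N) (auto intro!: sum_mono divide_right_mono)

lemma incseq_zs_partial: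
  assumes "incseq \<phi>" and "\<And>n. 0 \<le> \<phi> n"
  shows "incseq (zs_partial ks \<phi>)"
proof (cases ks)
  case Nil
  then show ?thesis using assms(1) by (simp add: incseq_def)
next
  case (Cons k ks')
  show ?thesis unfolding Cons
    by (intro incseq_SucI) (simp add: zs_partial_nonneg assms(2))
qed

lemma tendsto_zs_partial:
  assumes "\<And>n. 1 \<le> n \<Longrightarrow> (\<lambda>m. \<phi> m n) \<longlonglongrightarrow> \<psi> n" and "1 \<le> N"
  shows "(\<lambda>m. zs_partial ks (\<phi> m) N) \<longlonglongrightarrow> zs_partial ks \<psi> N"
  using assms(2)
proof (induction ks arbitrary: N)
  case Nil
  then show ?case using assms(1) by simp
next
  case (Cons k ks)
  show ?case
    by (simp only: zs_partial.simps) (intro tendsto_sum tendsto_mult_left Cons.IH; simp)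
qed

subsection \<open>The weight of a tail \<open>{p}^m\<close>\<close>

lemma euler_partial_Suc:
  "1 \<le> N \<Longrightarrow> euler_partial p (Suc N) = euler_partial p N / (1 - 1 / real (Suc N) ^ p)"
  unfolding euler_partial_def by simp

lemma euler_partial_ge_1:
  assumes "1 \<le> p"
  shows "1 \<le> euler_partial p N"
  unfolding euler_partial_def
proof (rule prod_ge_1)
  fix n assume n: "n \<in> {2..N}"
  then have "1 < real n ^ p"
    using assms by (intro one_less_power) auto
  then have "0 < 1 / real n ^ p" "1 / real n ^ p < 1"
    using n by (simp_all add: divide_less_eq)
  then show "1 \<le> 1 / (1 - 1 / real n ^ p)"
    by (simp add: field_simps)
qed

lemma incseq_euler_partial:
  assumes "1 \<le> p"
  shows "incseq (euler_partial p)"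
proof (rule incseq_SucI)
  fix N
  show "euler_partial p N \<le> euler_partial p (Suc N)"
  proof (cases "N = 0")
    case True
    then show ?thesis by (simp add: euler_partial_def)
  next
    case False
    have "1 < real (Suc N) ^ p"
      using False assms by (intro one_less_power) auto
    then show ?thesis
      using False euler_partial_ge_1[OF assms, of N]
      by (simp add: euler_partial_Suc field_simps)
  qed
qed

lemma zs_partial_euler_partial:
  assumes "1 \<le> p" and "1 \<le> N"
  shows "zs_partial [p] (euler_partial p) N = euler_partial p N"
  using assms(2)
proof (induction N rule: nat_induct_at_least)
  case base
  then show ?case by (simp add: euler_partial_def)
next
  case (Suc N)
  have "1 < real (Suc N) ^ p"
    using Suc assms(1) by (intro one_less_power) auto
  then have "1 - 1 / real (Suc N) ^ p \<noteq> 0" by simp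
  then show ?case
    using Suc by (simp add: euler_partial_Suc field_simps)
qed

lemma zs_partial_replicate_le_euler_partial:
  assumes "1 \<le> p"
  shows "zs_partial (replicate m p) (\<lambda>_. 1) N \<le> euler_partial p N"
proof (induction m arbitrary: N)
  case 0
  then show ?case using euler_partial_ge_1[OF assms] by simp
next
  case (Suc m)
  show ?case
  proof (cases "N = 0")
    case True
    then show ?thesis by (simp add: euler_partial_def)
  next
    case False
    have "zs_partial (replicate (Suc m) p) (\<lambda>_. 1) N
        = zs_partial [p] (zs_partial (replicate m p) (\<lambda>_. 1)) N"
      using zs_partial_append[of "[p]" "replicate m p"] by simp
    also have "\<dots> \<le> zs_partial [p] (euler_partial p) N"
      using Suc.IH by (rule zs_partial_mono)
    also have "\<dots> = euler_partial p N"
      using False by (intro zs_partial_euler_partial assms) simp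
    finally show ?thesis .
  qed
qed

lemma zs_partial_replicate_mono:
  assumes "1 \<le> N"
  shows "zs_partial (replicate m p) (\<lambda>_. 1) N \<le> zs_partial (replicate (Suc m) p) (\<lambda>_. 1) N"
  using assms
proof (induction m arbitrary: N)
  case 0
  then have "1 / real 1 ^ p \<le> (\<Sum>n = 1..N. 1 / real n ^ p)"
    by (intro member_le_sum) auto
  then show ?case by simp
next
  case (Suc m)
  have "zs_partial (replicate (Suc m) p) (\<lambda>_. 1) N
      = (\<Sum>n = 1..N. 1 / real n ^ p * zs_partial (replicate m p) (\<lambda>_. 1) n)"
    by simp
  also have "\<dots> \<le> (\<Sum>n = 1..N. 1 / real n ^ p * zs_partial (replicate (Suc m) p) (\<lambda>_. 1) n)"
    using Suc.IH by (intro sum_mono mult_left_mono) auto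
  also have "\<dots> = zs_partial (replicate (Suc (Suc m)) p) (\<lambda>_. 1) N"
    by simp
  finally show ?case .
qed

lemma tendsto_zs_partial_replicate:
  assumes "1 \<le> p" and "1 \<le> N"
  shows "(\<lambda>m. zs_partial (replicate m p) (\<lambda>_. 1) N) \<longlonglongrightarrow> euler_partial p N"
  using assms(2)
proof (induction N rule: nat_induct_at_least)
  case base
  have "zs_partial (replicate m p) (\<lambda>_. 1) 1 = 1" for m
    by (induction m) auto
  then show ?case by (simp add: euler_partial_def)
next
  case (Suc N)
  define h where "h = (\<lambda>m. zs_partial (replicate m p) (\<lambda>_. 1) (Suc N))"
  define c where "c = 1 / real (Suc N) ^ p"
  have "incseq h"
    unfolding h_def by (intro incseq_SucI zs_partial_replicate_mono) simp
  then obtain X where X: "h \<longlonglongrightarrow> X"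
    using incseq_convergent zs_partial_replicate_le_euler_partial[OF assms(1)]
    unfolding h_def by blast
  \<comment> \<open>Pass to the limit in \<open>h_{m+1}(N + 1) = h_{m+1}(N) + (N + 1)^{-p} h_m(N + 1)\<close>\<close>
  have "h (Suc m) = zs_partial (replicate (Suc m) p) (\<lambda>_. 1) N + c * h m" for m
    by (simp add: h_def c_def)
  then have "(\<lambda>m. h (Suc m)) \<longlonglongrightarrow> euler_partial p N + c * X"
    by (simp only:) (intro tendsto_add tendsto_mult_left X LIMSEQ_Suc[OF Suc.IH])
  then have "X = euler_partial p N + c * X"
    using LIMSEQ_unique LIMSEQ_Suc[OF X] by blast
  moreover have "1 < real (Suc N) ^ p"
    using Suc assms(1) by (intro one_less_power) auto
  then have "c \<noteq> 1"
    by (simp add: c_def)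
  ultimately have "X = euler_partial p (Suc N)"
    using Suc by (simp add: euler_partial_Suc c_def field_simps)
  then show ?case using X unfolding h_def by simp
qed

subsection \<open>Exchanging the limits\<close>

lemma LIMSEQ_by_lower_approximations:
  fixes z :: "nat \<Rightarrow> real" and a :: "nat \<Rightarrow> nat \<Rightarrow> real"
  assumes below: "\<And>m N. a m N \<le> z m" and bound: "\<And>m. z m \<le> L"
    and approx: "\<And>N. (\<lambda>m. a m N) \<longlonglongrightarrow> b N" and lim: "b \<longlonglongrightarrow> L"
  shows "z \<longlonglongrightarrow> L"
proof (rule LIMSEQ_I)
  fix r :: real assume "0 < r"
  then obtain N where N: "\<bar>b N - L\<bar> < r / 2"
    using LIMSEQ_D[OF lim, of "r / 2"] by auto
  obtain M where M: "\<And>m. M \<le> m \<Longrightarrow> \<bar>a m N - b N\<bar> < r / 2"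
    using LIMSEQ_D[OF approx, of "r / 2"] \<open>0 < r\<close> by auto
  have "\<bar>z m - L\<bar> < r" if "M \<le> m" for m
    using M[OF that] N below[of m N] bound[of m] \<open>0 < r\<close> by linarith
  then show "\<exists>M. \<forall>m\<ge>M. norm (z m - L) < r" by auto
qed

theorem tendsto_zeta_star_append_replicate:
  assumes p: "1 \<le> p" and lim: "(\<lambda>N. zs_partial ks (euler_partial p) N) \<longlonglongrightarrow> L"
  shows "(\<lambda>m. zeta_star (ks @ replicate m p)) \<longlonglongrightarrow> L"
proof -
  define tail where "tail m = zs_partial (replicate m p) (\<lambda>_. 1)" for m
  have euler_nonneg: "0 \<le> euler_partial p n" for n
    using euler_partial_ge_1[OF p, of n] by linarith
  have trunc: "sum (zs_term (ks @ replicate m p)) (zs_index_upto (length (ks @ replicate m p)) N)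
      = zs_partial ks (tail m) N" for m N
    using zs_partial_eq_sum[of "ks @ replicate m p" "\<lambda>_. 1" N]
    by (simp add: zs_partial_append tail_def)
  have tail_le_L: "zs_partial ks (tail m) N \<le> L" for m N
  proof -
    have "zs_partial ks (tail m) N \<le> zs_partial ks (euler_partial p) N"
      unfolding tail_def by (intro zs_partial_mono zs_partial_replicate_le_euler_partial p)
    also have "\<dots> \<le> L"
      using incseq_zs_partial[OF incseq_euler_partial[OF p] euler_nonneg] lim by (rule incseq_le)
    finally show ?thesis .
  qed
  have "sum (zs_term (ks @ replicate m p)) (zs_index_upto (length (ks @ replicate m p)) N) \<le> L"
    for m N
    unfolding trunc by (rule tail_le_L)
  note sums = bounded_zs_index_upto_sums[OF zs_term_nonneg this]
  show ?thesis
  proof (rule LIMSEQ_by_lower_approximations)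
    fix m N
    show "zs_partial ks (tail m) (Suc N) \<le> zeta_star (ks @ replicate m p)"
      using sum_zs_index_upto_le_infsum[OF zs_term_nonneg sums(1)]
      unfolding zeta_star_eq_infsum_zs_term trunc .
    show "zeta_star (ks @ replicate m p) \<le> L"
      using sums(2) unfolding zeta_star_eq_infsum_zs_term .
    show "(\<lambda>m. zs_partial ks (tail m) (Suc N)) \<longlonglongrightarrow> zs_partial ks (euler_partial p) (Suc N)"
      unfolding tail_def by (intro tendsto_zs_partial tendsto_zs_partial_replicate p) auto
  next
    show "(\<lambda>N. zs_partial ks (euler_partial p) (Suc N)) \<longlonglongrightarrow> L"
      using lim by (rule LIMSEQ_Suc)
  qed
qed

subsection \<open>The Euler product\<close>

lemma euler_partial_2: "1 \<le> N \<Longrightarrow> euler_partial 2 N = 2 * real N / (real N + 1)"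
proof (induction N rule: nat_induct_at_least)
  case base
  then show ?case by (simp add: euler_partial_def)
next
  case (Suc N)
  have "2 * x / (x + 1) / (1 - 1 / (x + 1) ^ 2) = 2 * (x + 1) / (x + 2)" if "0 < x" for x :: real
  proof -
    have "x + 1 \<noteq> 0" "x + 2 \<noteq> 0" "x \<noteq> 0"
      using that by auto
    moreover have "1 - 1 / (x + 1) ^ 2 = x * (x + 2) / (x + 1) ^ 2"
      using \<open>x + 1 \<noteq> 0\<close> by (simp add: field_simps) (simp add: power2_eq_square algebra_simps)
    ultimately show ?thesis
      by (simp add: divide_simps power2_eq_square)
  qed
  from this[of "real N"] show ?case
    using Suc by (simp add: euler_partial_Suc add.commute)
qed

lemma euler_partial_le_2:
  assumes "2 \<le> p"
  shows "euler_partial p N \<le> 2"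
proof -
  have "euler_partial p N \<le> euler_partial 2 N"
    unfolding euler_partial_def
  proof (intro prod_mono conjI)
    fix n assume n: "n \<in> {2..N}"
    then have "1 < real n ^ 2" "real n ^ 2 \<le> real n ^ p"
      using assms by (auto intro: one_less_power power_increasing)
    moreover have "0 < real n ^ 2"
      using n by simp
    ultimately have "1 / real n ^ p \<le> 1 / real n ^ 2" "1 / real n ^ 2 < 1"
      by (auto intro: divide_left_mono simp: divide_less_eq)
    then show "0 \<le> 1 / (1 - 1 / real n ^ p)" "1 / (1 - 1 / real n ^ p) \<le> 1 / (1 - 1 / real n ^ 2)"
      by (auto intro!: divide_left_mono)
  qed
  also have "\<dots> \<le> 2"
    by (cases "N = 0") (simp add: euler_partial_def, simp add: euler_partial_2 field_simps)
  finally show ?thesis .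
qed

lemma euler_partial_tendsto_prodinf:
  assumes p: "2 \<le> p"
  shows "euler_partial p \<longlonglongrightarrow> (\<Prod>n. 1 / (1 - 1 / real (n + 2) ^ p))"
proof -
  define f where "f = (\<lambda>n. 1 / (1 - 1 / real (n + 2) ^ p))"
  have partial_prod: "(\<Prod>i\<le>n. f i) = euler_partial p (n + 2)" for n
  proof -
    have "euler_partial p (n + 2) = (\<Prod>i = 0 + 2..n + 2. 1 / (1 - 1 / real i ^ p))"
      unfolding euler_partial_def by (simp only: add_0)
    also have "\<dots> = (\<Prod>i = 0..n. f i)"
      unfolding f_def by (rule prod.shift_bounds_cl_nat_ivl)
    finally show ?thesis
      by (simp add: atMost_atLeast0)
  qed
  have p1: "1 \<le> p"
    using p by simp
  obtain L where L: "euler_partial p \<longlonglongrightarrow> L"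
    using incseq_convergent[OF incseq_euler_partial[OF p1], of 2] euler_partial_le_2[OF p] by blast
  have "1 \<le> L"
    using euler_partial_ge_1[OF p1] by (intro LIMSEQ_le_const[OF L]) simp
  moreover have "f n \<noteq> 0" for n
  proof -
    have "1 < real (n + 2) ^ p"
      using p by (intro one_less_power) auto
    then show ?thesis by (simp add: f_def)
  qed
  moreover have "(\<lambda>n. \<Prod>i\<le>n. f i) \<longlonglongrightarrow> L"
    unfolding partial_prod using L by (rule LIMSEQ_ignore_initial_segment)
  ultimately have "convergent_prod f"
    by (subst convergent_prod_iff_nz_lim) auto
  then have "L = prodinf f"
    using LIMSEQ_unique[OF \<open>(\<lambda>n. \<Prod>i\<le>n. f i) \<longlonglongrightarrow> L\<close> convergent_prod_LIMSEQ] by blast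
  then show ?thesis
    using L unfolding f_def by simp
qed

subsection \<open>A uniform bound for the truncations\<close>

lemma sum_inverse_sqrt_le: "(\<Sum>n = 1..N. 1 / sqrt (real n)) \<le> 2 * sqrt (real N)"
proof (induction N)
  case 0
  then show ?case by simp
next
  case (Suc N)
  define a where "a = sqrt (real N)"
  define b where "b = sqrt (real (Suc N))"
  have "0 < b" "b ^ 2 = a ^ 2 + 1"
    unfolding a_def b_def by simp_all
  moreover have "2 * a * b \<le> a ^ 2 + b ^ 2"
    using sum_squares_bound .
  ultimately have "2 * a + 1 / b \<le> 2 * b"
    by (simp add: field_simps power2_eq_square)
  then show ?case
    using Suc by (simp add: a_def b_def)
qed

lemma zs_partial_le_sqrt:
  assumes "\<forall>k\<in>set ks. 1 \<le> k" and "\<And>n. 0 \<le> \<phi> n" and "\<And>n. \<phi> n \<le> c" and "1 \<le> N"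
  shows "zs_partial ks \<phi> N \<le> c * 2 ^ length ks * sqrt (real N)"
  using assms(1,4)
proof (induction ks arbitrary: N)
  case Nil
  have "0 \<le> c"
    using assms(2)[of 0] assms(3)[of 0] by linarith
  then show ?case
    using assms(3)[of N] Nil.prems mult_left_mono[of 1 "sqrt (real N)" c] by simp
next
  case (Cons k ks)
  have "zs_partial (k # ks) \<phi> N \<le> (\<Sum>n = 1..N. c * 2 ^ length ks * (1 / sqrt (real n)))"
  proof (simp only: zs_partial.simps, rule sum_mono)
    fix n assume n: "n \<in> {1..N}"
    have "1 / real n ^ k * zs_partial ks \<phi> n \<le> 1 / real n * (c * 2 ^ length ks * sqrt (real n))"
    proof (rule mult_mono)
      show "1 / real n ^ k \<le> 1 / real n"
        using n Cons.prems by (intro divide_left_mono) (auto intro: power_increasing[of 1, simplified])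
      show "zs_partial ks \<phi> n \<le> c * 2 ^ length ks * sqrt (real n)"
        using n Cons by (intro Cons.IH) auto
    qed (use n zs_partial_nonneg[OF assms(2)] in auto)
    also have "\<dots> = c * 2 ^ length ks * (1 / sqrt (real n))"
      using n by (simp add: field_simps)
    finally show "1 / real n ^ k * zs_partial ks \<phi> n \<le> c * 2 ^ length ks * (1 / sqrt (real n))" .
  qed
  also have "\<dots> \<le> c * 2 ^ length ks * (2 * sqrt (real N))"
    unfolding sum_distrib_left[symmetric] using assms(2)[of 0] assms(3)[of 0]
    by (intro mult_left_mono sum_inverse_sqrt_le) auto
  finally show ?case by simp
qed

lemma powr_minus_three_halves:
  fixes x :: real
  assumes "0 < x"
  shows "x powr (-3/2) = sqrt x / x ^ 2"
proof -
  have "x powr (-3/2) = x powr (1/2) * x powr (-2)"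
    by (subst powr_add[symmetric]) simp
  also have "\<dots> = sqrt x / x ^ 2"
    using assms by (simp add: powr_half_sqrt powr_minus field_simps)
  finally show ?thesis .
qed

lemma zs_partial_Cons_le_suminf:
  assumes "2 \<le> k" and "\<forall>j\<in>set ks. 1 \<le> j" and "\<And>n. 0 \<le> \<phi> n" and "\<And>n. \<phi> n \<le> c"
  shows "zs_partial (k # ks) \<phi> N \<le> c * 2 ^ length ks * (\<Sum>n. real n powr (-3/2))"
proof -
  define C where "C = c * 2 ^ length ks"
  have "0 \<le> C"
    unfolding C_def using assms(3)[of 0] assms(4)[of 0] by simp
  have "zs_partial (k # ks) \<phi> N \<le> (\<Sum>n = 1..N. C * real n powr (-3/2))"
  proof (simp only: zs_partial.simps, rule sum_mono)
    fix n assume n: "n \<in> {1..N}"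
    have "1 / real n ^ k * zs_partial ks \<phi> n \<le> 1 / real n ^ 2 * (C * sqrt (real n))"
    proof (rule mult_mono)
      show "1 / real n ^ k \<le> 1 / real n ^ 2"
        using n assms(1) by (intro divide_left_mono power_increasing) auto
      show "zs_partial ks \<phi> n \<le> C * sqrt (real n)"
        unfolding C_def using n by (intro zs_partial_le_sqrt assms) auto
    qed (use n \<open>0 \<le> C\<close> zs_partial_nonneg[OF assms(3)] in auto)
    also have "\<dots> = C * real n powr (-3/2)"
      using n by (subst powr_minus_three_halves) auto
    finally show "1 / real n ^ k * zs_partial ks \<phi> n \<le> C * real n powr (-3/2)" .
  qed
  also have "\<dots> \<le> C * (\<Sum>n. real n powr (-3/2))"
    unfolding sum_distrib_left[symmetric] using \<open>0 \<le> C\<close>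
    by (intro mult_left_mono sum_le_suminf) (auto simp: summable_real_powr_iff)
  finally show ?thesis unfolding C_def .
qed

lemma tendsto_zs_partial_infsum:
  assumes "ks \<noteq> []" and "2 \<le> hd ks" and "\<forall>k\<in>set ks. 1 \<le> k"
    and "\<And>n. 0 \<le> \<phi> n" and "\<And>n. \<phi> n \<le> c"
  shows "(\<lambda>N. zs_partial ks \<phi> N) \<longlonglongrightarrow> (\<Sum>\<^sub>\<infinity>ns\<in>zs_index (length ks). zs_term ks ns * \<phi> (last ns))"
proof -
  obtain k ks' where ks: "ks = k # ks'"
    using assms(1) by (cases ks) auto
  define g where "g ns = zs_term ks ns * \<phi> (last ns)" for ns
  have partial_eq: "zs_partial ks \<phi> N = sum g (zs_index_upto (length ks) N)" for N
    unfolding zs_partial_eq_sum g_def by (intro sum.cong) (auto simp: ks zs_index_upto_def)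
  have "(\<lambda>N. sum g (zs_index_upto (length ks) N)) \<longlonglongrightarrow> infsum g (zs_index (length ks))"
  proof (rule tendsto_sum_zs_index_upto)
    show "0 \<le> g ns" for ns
      unfolding g_def by (intro mult_nonneg_nonneg zs_term_nonneg assms(4))
    show "sum g (zs_index_upto (length ks) N) \<le> c * 2 ^ length ks' * (\<Sum>n. real n powr (-3/2))"
      for N
      using partial_eq[of N] zs_partial_Cons_le_suminf[of k ks' \<phi> c N] assms(2-5) by (simp add: ks)
  qed
  then show ?thesis
    unfolding partial_eq g_def .
qed

lemma zs_term_mult_euler_partial_2:
  assumes "ks \<noteq> []" and "\<forall>k\<in>set ks. 1 \<le> k" and ns: "ns \<in> zs_index (length ks)"
  shows "zs_term ks ns * euler_partial 2 (last ns)
    = 2 / ((\<Prod>i<length ks - 1. real (ns ! i) ^ (ks ! i))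
           * real (last ns) ^ (last ks - 1) * (real (last ns) + 1))"
proof -
  obtain r where r: "length ks = Suc r"
    using assms(1) by (cases ks) auto
  moreover have "length ns = Suc r"
    using ns r by (simp add: zs_index_def)
  ultimately have last_eq: "last ns = ns ! r" "last ks = ks ! r"
    by (metis diff_Suc_1 last_conv_nth list.size(3) nat.distinct(1))+
  define P where "P = (\<Prod>i<r. real (ns ! i) ^ (ks ! i))"
  define l where "l = real (last ns)"
  define k where "k = last ks"
  have "0 < P"
    unfolding P_def
  proof (intro prod_pos zero_less_power)
    fix i assume "i \<in> {..<r}"
    then have "ns ! i \<in> set ns"
      using \<open>length ns = Suc r\<close> by simp
    then show "0 < real (ns ! i)"
      using ns by (auto simp: zs_index_def)
  qed
  have "last ns \<in> set ns" "last ks \<in> set ks"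
    using assms(1) \<open>length ns = Suc r\<close> by (auto intro!: last_in_set)
  then have "1 \<le> l" "1 \<le> k"
    using ns assms(2) by (auto simp: l_def k_def zs_index_def)
  have "l ^ k = l * l ^ (k - 1)"
    using \<open>1 \<le> k\<close> by (cases k) auto
  then have "zs_term ks ns = 1 / (P * (l * l ^ (k - 1)))"
    unfolding zs_term_def r P_def l_def k_def last_eq by (simp add: prod_dividef)
  moreover have "euler_partial 2 (last ns) = 2 * l / (l + 1)"
    using \<open>1 \<le> l\<close> by (simp add: euler_partial_2 l_def)
  moreover have "P \<noteq> 0" "l \<noteq> 0" "l + 1 \<noteq> 0" "l ^ (k - 1) \<noteq> 0"
    using \<open>0 < P\<close> \<open>1 \<le> l\<close> by auto
  ultimately have "zs_term ks ns * euler_partial 2 (last ns) = 2 / (P * l ^ (k - 1) * (l + 1))"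
    by (simp only:) (simp add: divide_simps)
  then show ?thesis
    unfolding P_def l_def k_def r by simp
qed

theorem corollary6p2:
  shows "(\<forall>ks::nat list. ks \<noteq> [] \<and> 2 \<le> hd ks \<and> (\<forall>k\<in>set ks. 1 \<le> k) \<longrightarrow>
           (\<lambda>m. zeta_star (ks @ replicate m 2)) \<longlonglongrightarrow>
             (\<Sum>\<^sub>\<infinity>ns\<in>zs_index (length ks).
                2 / ((\<Prod>i<length ks - 1. real (ns ! i) ^ (ks ! i))
                     * real (last ns) ^ (last ks - 1) * (real (last ns) + 1))))
       \<and> (\<forall>p::nat. 2 \<le> p \<longrightarrow>
           (\<lambda>m. zeta_star (replicate m p)) \<longlonglongrightarrow>
             (\<Prod>n. 1 / (1 - 1 / real (n + 2) ^ p)))"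
proof (intro conjI allI impI)
  fix ks :: "nat list"
  assume ks: "ks \<noteq> [] \<and> 2 \<le> hd ks \<and> (\<forall>k\<in>set ks. 1 \<le> k)"
  have "0 \<le> euler_partial 2 n" for n
    using euler_partial_ge_1[of 2 n] by simp
  then have "(\<lambda>N. zs_partial ks (euler_partial 2) N)
      \<longlonglongrightarrow> (\<Sum>\<^sub>\<infinity>ns\<in>zs_index (length ks). zs_term ks ns * euler_partial 2 (last ns))"
    using ks euler_partial_le_2[of 2] by (intro tendsto_zs_partial_infsum) auto
  also have "(\<Sum>\<^sub>\<infinity>ns\<in>zs_index (length ks). zs_term ks ns * euler_partial 2 (last ns))
      = (\<Sum>\<^sub>\<infinity>ns\<in>zs_index (length ks). 2 / ((\<Prod>i<length ks - 1. real (ns ! i) ^ (ks ! i))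
           * real (last ns) ^ (last ks - 1) * (real (last ns) + 1)))"
    using ks by (intro infsum_cong zs_term_mult_euler_partial_2) auto
  finally show "(\<lambda>m. zeta_star (ks @ replicate m 2)) \<longlonglongrightarrow> \<dots>"
    by (intro tendsto_zeta_star_append_replicate) simp_all
next
  fix p :: nat
  assume "2 \<le> p"
  then show "(\<lambda>m. zeta_star (replicate m p)) \<longlonglongrightarrow> (\<Prod>n. 1 / (1 - 1 / real (n + 2) ^ p))"
    using tendsto_zeta_star_append_replicate[of p "[]"] euler_partial_tendsto_prodinf by simp
qed

end
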